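(* Let $\Gamma$ be a connected $\delta$-hyperbolic graph with base vertex $x_0$, and let $x\in\Gamma$ and $n\le\ell(x)$. Let $p\in V(x,B_n)$, let $x_0,x_1,\ldots,x_{\ell(x)}$ be a geodesic from $x_0$ to $x$, and let $p_0,p_1,\ldots,p_n$ be a geodesic from $x_0$ to $p$. Then $d(x_i,p_i)\le4\delta+2$ for all $0\le i\le n$.
   Context: $\Gamma$ is identified with its vertex set with path metric $d$. It is $\delta$-hyperbolic if for every geodesic triangle with sides $[a,b],[a,c],[b,c]$ and every vertex $v\in[a,b]$ there is a vertex $w\in[a,c]\cup[b,c]$ with $d(v,w)\le\delta$. Set $\ell(x)=d(x_0,x)$ and $B_n=\{x:\ell(x)\le n\}$. For finite $B\subseteq\Gamma$ and $x\in\Gamma$, a point $p\in B$ is visible from $x$ if $d(p,x)<d(p,q)+d(q,x)$ for all $q\in B\setminus\{p\}$; $V(x,B)$ denotes the set of such points. *)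

theory Defs
  imports Complex_Main
begin

text \<open>A graph is given by a symmetric adjacency relation E on the vertex type 'a;
  the graph is identified with its vertex set (all of 'a).\<close>

definition is_walk :: "('a \<Rightarrow> 'a \<Rightarrow> bool) \<Rightarrow> (nat \<Rightarrow> 'a) \<Rightarrow> nat \<Rightarrow> bool" where
  "is_walk E f n \<longleftrightarrow> (\<forall>i<n. E (f i) (f (Suc i)))"

definition graph_connected :: "('a \<Rightarrow> 'a \<Rightarrow> bool) \<Rightarrow> bool" where
  "graph_connected E \<longleftrightarrow> (\<forall>u v. \<exists>f n. f 0 = u \<and> f n = v \<and> is_walk E f n)"

definition gdist :: "('a \<Rightarrow> 'a \<Rightarrow> bool) \<Rightarrow> 'a \<Rightarrow> 'a \<Rightarrow> nat" where
  "gdist E u v = (LEAST n. \<exists>f. f 0 = u \<and> f n = v \<and> is_walk E f n)"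

definition is_geodesic :: "('a \<Rightarrow> 'a \<Rightarrow> bool) \<Rightarrow> 'a \<Rightarrow> 'a \<Rightarrow> (nat \<Rightarrow> 'a) \<Rightarrow> bool" where
  "is_geodesic E a b g \<longleftrightarrow> g 0 = a \<and> g (gdist E a b) = b \<and>
     (\<forall>i\<le>gdist E a b. \<forall>j\<le>gdist E a b. gdist E (g i) (g j) = (if i \<le> j then j - i else i - j))"

definition geod_verts :: "('a \<Rightarrow> 'a \<Rightarrow> bool) \<Rightarrow> 'a \<Rightarrow> 'a \<Rightarrow> (nat \<Rightarrow> 'a) \<Rightarrow> 'a set" where
  "geod_verts E a b g = g ` {0..gdist E a b}"

definition hyperbolic :: "('a \<Rightarrow> 'a \<Rightarrow> bool) \<Rightarrow> real \<Rightarrow> bool" where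
  "hyperbolic E \<delta> \<longleftrightarrow>
    (\<forall>a b c gab gac gbc. is_geodesic E a b gab \<and> is_geodesic E a c gac \<and> is_geodesic E b c gbc \<longrightarrow>
      (\<forall>v\<in>geod_verts E a b gab. \<exists>w\<in>geod_verts E a c gac \<union> geod_verts E b c gbc.
          real (gdist E v w) \<le> \<delta>))"

definition ball_n :: "('a \<Rightarrow> 'a \<Rightarrow> bool) \<Rightarrow> 'a \<Rightarrow> nat \<Rightarrow> 'a set" where
  "ball_n E x0 n = {x. gdist E x0 x \<le> n}"

definition visible_set :: "('a \<Rightarrow> 'a \<Rightarrow> bool) \<Rightarrow> 'a \<Rightarrow> 'a set \<Rightarrow> 'a set" where
  "visible_set E x B = {p\<in>B. \<forall>q\<in>B - {p}. gdist E p x < gdist E p q + gdist E q x}"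

end

theory Submission
  imports Defs
begin

text \<open>Visibility forces \<open>\<ell>(p) = n\<close> and pushes every vertex of a geodesic \<open>[p,x]\<close> other
  than \<open>p\<close> out of \<open>B\<^sub>n\<close>. In the triangle \<open>x\<^sub>0, p, x\<close> each \<open>p\<^sub>j\<close> is \<open>\<delta>\<close>-close to \<open>[x\<^sub>0,x]\<close> or
  to \<open>[p,x]\<close>, and the latter forces \<open>n \<le> j + \<delta>\<close>. So for \<open>i \<le> n\<close> the last \<open>j \<le> i\<close> with \<open>p\<^sub>j\<close>
  \<open>\<delta>\<close>-close to some \<open>x\<^sub>k\<close> has \<open>i - j \<le> 1 + \<delta>\<close>; as both geodesics start at \<open>x\<^sub>0\<close>,
  \<open>|k - j| \<le> \<delta>\<close>, and the triangle inequality gives \<open>d(x\<^sub>i,p\<^sub>i) \<le> 2(i - j) + 2\<delta> \<le> 4\<delta> + 2\<close>.\<close>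

lemma gdist_walk:
  assumes "graph_connected E"
  obtains f where "f 0 = u" "f (gdist E u v) = v" "is_walk E f (gdist E u v)"
proof -
  from assms obtain f n where "f 0 = u \<and> f n = v \<and> is_walk E f n"
    unfolding graph_connected_def by blast
  then have "\<exists>n f. f 0 = u \<and> f n = v \<and> is_walk E f n" by blast
  then have "\<exists>f. f 0 = u \<and> f (gdist E u v) = v \<and> is_walk E f (gdist E u v)"
    unfolding gdist_def by (rule LeastI_ex)
  then show ?thesis using that by blast
qed

lemma gdist_le_walk: "f 0 = u \<Longrightarrow> f k = v \<Longrightarrow> is_walk E f k \<Longrightarrow> gdist E u v \<le> k"
  unfolding gdist_def by (rule Least_le) blast

lemma gdist_self [simp]: "gdist E u u = 0"
  using gdist_le_walk[of "\<lambda>_. u" u 0 u E] by (simp add: is_walk_def)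

lemma gdist_eq_0_imp_eq: "graph_connected E \<Longrightarrow> gdist E u v = 0 \<Longrightarrow> u = v"
  by (metis gdist_walk)

lemma gdist_walk_segment:
  assumes "is_walk E f k" "i \<le> j" "j \<le> k"
  shows "gdist E (f i) (f j) \<le> j - i"
proof -
  have "is_walk E (\<lambda>t. f (i + t)) (j - i)"
    using assms unfolding is_walk_def by auto
  then show ?thesis
    using gdist_le_walk[of "\<lambda>t. f (i + t)" "f i" "j - i" "f j"] assms by simp
qed

lemma gdist_triangle:
  assumes "graph_connected E"
  shows "gdist E u w \<le> gdist E u v + gdist E v w"
proof -
  define a b where "a = gdist E u v" and "b = gdist E v w"
  obtain f where f: "f 0 = u" "f a = v" "is_walk E f a"
    using gdist_walk[OF assms] unfolding a_def by blast
  obtain g where g: "g 0 = v" "g b = w" "is_walk E g b"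
    using gdist_walk[OF assms] unfolding b_def by blast
  define h where "h = (\<lambda>i. if i \<le> a then f i else g (i - a))"
  have "E (h i) (h (Suc i))" if i: "i < a + b" for i
  proof (cases "i < a")
    case True
    then show ?thesis using f(3) unfolding h_def is_walk_def by auto
  next
    case False
    then have "h i = g (i - a)" "h (Suc i) = g (Suc (i - a))" "i - a < b"
      using f(2) g(1) i unfolding h_def by (auto simp: Suc_diff_le)
    then show ?thesis using g(3) unfolding is_walk_def by auto
  qed
  then have "is_walk E h (a + b)" unfolding is_walk_def by blast
  moreover have "h 0 = u" "h (a + b) = w"
    using f g unfolding h_def by (auto split: if_splits)
  ultimately show ?thesis using gdist_le_walk a_def b_def by metis
qed

lemma gdist_le_reverse:
  assumes sym: "\<And>u v. E u v \<Longrightarrow> E v u" and conn: "graph_connected E"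
  shows "gdist E u v \<le> gdist E v u"
proof -
  define k where "k = gdist E v u"
  obtain f where f: "f 0 = v" "f k = u" "is_walk E f k"
    using gdist_walk[OF conn] unfolding k_def by blast
  have "E (f (k - i)) (f (k - Suc i))" if "i < k" for i
  proof -
    have "E (f (k - Suc i)) (f (Suc (k - Suc i)))"
      using f(3) that unfolding is_walk_def by auto
    moreover have "Suc (k - Suc i) = k - i" using that by simp
    ultimately show ?thesis using sym by auto
  qed
  then have "is_walk E (\<lambda>i. f (k - i)) k" unfolding is_walk_def by blast
  then show ?thesis using gdist_le_walk[of "\<lambda>i. f (k - i)" u k v] f unfolding k_def by simp
qed

lemma gdist_commute:
  assumes "\<And>u v. E u v \<Longrightarrow> E v u" and "graph_connected E"
  shows "gdist E u v = gdist E v u"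
  using gdist_le_reverse[OF assms, of u v] gdist_le_reverse[OF assms, of v u] by simp

lemma geodesic_gdist:
  assumes "is_geodesic E a b g" "i \<le> j" "j \<le> gdist E a b"
  shows "gdist E (g i) (g j) = j - i"
  using assms unfolding is_geodesic_def by auto

lemma geodesic_gdist_start:
  assumes "is_geodesic E a b g" "i \<le> gdist E a b"
  shows "gdist E a (g i) = i"
  using geodesic_gdist[OF assms(1) _ assms(2), of 0] assms(1) unfolding is_geodesic_def by simp

lemma geodesic_exists:
  assumes sym: "\<And>u v. E u v \<Longrightarrow> E v u" and conn: "graph_connected E"
  obtains g where "is_geodesic E u v g"
proof -
  define d where "d = gdist E u v"
  obtain f where f: "f 0 = u" "f d = v" "is_walk E f d"
    using gdist_walk[OF conn] unfolding d_def by blast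
  have f_gdist: "gdist E (f i) (f j) = j - i" if "i \<le> j" "j \<le> d" for i j
  proof -
    have "d \<le> gdist E u (f i) + gdist E (f i) (f j) + gdist E (f j) v"
      using gdist_triangle[OF conn, of u v "f i"] gdist_triangle[OF conn, of "f i" v "f j"]
      unfolding d_def by simp
    moreover have "gdist E u (f i) \<le> i" "gdist E (f j) v \<le> d - j"
      using gdist_walk_segment[OF f(3), of 0 i] gdist_walk_segment[OF f(3), of j d] f that
      by simp_all
    moreover have "gdist E (f i) (f j) \<le> j - i" using gdist_walk_segment[OF f(3) that] .
    ultimately show ?thesis using that by linarith
  qed
  have "gdist E (f i) (f j) = (if i \<le> j then j - i else i - j)" if "i \<le> d" "j \<le> d" for i j
    using f_gdist[of i j] f_gdist[of j i] gdist_commute[OF sym conn, of "f i" "f j"] that by auto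
  then have "is_geodesic E u v f"
    unfolding is_geodesic_def using f d_def by auto
  then show ?thesis using that by blast
qed

text \<open>Degenerate triangles at a single vertex already force \<open>\<delta> \<ge> 0\<close>.\<close>

lemma hyperbolic_nonneg:
  assumes "hyperbolic E \<delta>"
  shows "0 \<le> \<delta>"
proof -
  fix u :: 'a
  have g: "is_geodesic E u u (\<lambda>_. u)" unfolding is_geodesic_def by simp
  have "u \<in> geod_verts E u u (\<lambda>_. u)" unfolding geod_verts_def by simp
  then obtain w where "real (gdist E u w) \<le> \<delta>"
    using assms[unfolded hyperbolic_def, rule_format, of u u "\<lambda>_. u" u "\<lambda>_. u" "\<lambda>_. u"] g
    by blast
  then show ?thesis by linarith
qed

lemma geodesics_from_common_start_close:
  assumes sym: "\<And>u v. E u v \<Longrightarrow> E v u" and conn: "graph_connected E"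
    and xs: "is_geodesic E x0 a xs" and ps: "is_geodesic E x0 b ps"
    and k: "k \<le> gdist E x0 a" and ji: "j \<le> i"
    and ia: "i \<le> gdist E x0 a" and ib: "i \<le> gdist E x0 b"
  shows "gdist E (xs i) (ps i) \<le> 2 * (i - j) + 2 * gdist E (ps j) (xs k)"
proof -
  define d where "d = gdist E (ps j) (xs k)"
  note tri = gdist_triangle[OF conn] and comm = gdist_commute[OF sym conn]
  have start: "gdist E x0 (xs k) = k" "gdist E x0 (ps j) = j"
    using geodesic_gdist_start[OF xs k] geodesic_gdist_start[OF ps, of j] ji ib by simp_all
  have "k \<le> j + d" "j \<le> k + d"
    using tri[of x0 "xs k" "ps j"] tri[of x0 "ps j" "xs k"] start comm[of "xs k" "ps j"]
    unfolding d_def by simp_all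
  then have "gdist E (xs k) (xs i) \<le> d + (i - j)"
    using geodesic_gdist[OF xs, of k i] geodesic_gdist[OF xs, of i k] comm[of "xs k" "xs i"]
      k ia ji by (cases "k \<le> i") auto
  moreover have "gdist E (ps i) (ps j) = i - j"
    using geodesic_gdist[OF ps ji ib] comm[of "ps i" "ps j"] by simp
  moreover have "gdist E (xs i) (ps i)
      \<le> gdist E (ps i) (ps j) + gdist E (ps j) (xs k) + gdist E (xs k) (xs i)"
    using tri[of "ps i" "xs k" "ps j"] tri[of "ps i" "xs i" "xs k"] comm[of "xs i" "ps i"]
    by linarith
  ultimately show ?thesis unfolding d_def by linarith
qed

lemma visible_geodesic_leaves:
  assumes vis: "p \<in> visible_set E x B" and g: "is_geodesic E p x g"
    and s: "0 < s" "s \<le> gdist E p x"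
  shows "g s \<notin> B"
proof
  assume "g s \<in> B"
  moreover have "gdist E p (g s) = s" using geodesic_gdist_start[OF g s(2)] .
  moreover have "gdist E (g s) x = gdist E p x - s"
    using geodesic_gdist[OF g s(2)] g unfolding is_geodesic_def by simp
  moreover have "g s \<noteq> p" using \<open>gdist E p (g s) = s\<close> s(1) by auto
  ultimately show False using vis s unfolding visible_set_def by force
qed

lemma visible_on_sphere:
  assumes sym: "\<And>u v. E u v \<Longrightarrow> E v u" and conn: "graph_connected E"
    and n_le: "n \<le> gdist E x0 x" and vis: "p \<in> visible_set E x (ball_n E x0 n)"
  shows "gdist E x0 p = n"
proof (cases "gdist E p x = 0")
  case True
  then have "p = x" using gdist_eq_0_imp_eq[OF conn] by blast
  then show ?thesis using n_le vis unfolding visible_set_def ball_n_def by simp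
next
  case False
  obtain g where g: "is_geodesic E p x g" using geodesic_exists[OF sym conn] .
  have "n < gdist E x0 (g 1)"
    using visible_geodesic_leaves[OF vis g, of 1] False unfolding ball_n_def by simp
  also have "\<dots> \<le> gdist E x0 p + 1"
    using gdist_triangle[OF conn, of x0 "g 1" p] geodesic_gdist_start[OF g, of 1] False by simp
  finally show ?thesis using vis unfolding visible_set_def ball_n_def by simp
qed

lemma visible_geodesic_close_or_late:
  assumes sym: "\<And>u v. E u v \<Longrightarrow> E v u" and conn: "graph_connected E"
    and hyp: "hyperbolic E \<delta>"
    and n_le: "n \<le> gdist E x0 x" and vis: "p \<in> visible_set E x (ball_n E x0 n)"
    and xs: "is_geodesic E x0 x xs" and ps: "is_geodesic E x0 p ps" and j: "j \<le> n"
  shows "(\<exists>k\<le>gdist E x0 x. real (gdist E (ps j) (xs k)) \<le> \<delta>) \<or> real n \<le> real j + \<delta>"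
proof -
  have p_n: "gdist E x0 p = n" using visible_on_sphere[OF sym conn n_le vis] .
  obtain g where g: "is_geodesic E p x g" using geodesic_exists[OF sym conn] .
  have "ps j \<in> geod_verts E x0 p ps" unfolding geod_verts_def using j p_n by auto
  then obtain w where w: "w \<in> geod_verts E x0 x xs \<union> geod_verts E p x g"
    "real (gdist E (ps j) w) \<le> \<delta>"
    using hyp xs ps g unfolding hyperbolic_def by blast
  show ?thesis
  proof (cases "w \<in> geod_verts E x0 x xs")
    case True
    then show ?thesis using w(2) unfolding geod_verts_def by auto
  next
    case False
    then obtain s where s: "s \<le> gdist E p x" "w = g s"
      using w(1) unfolding geod_verts_def by auto
    have "n \<le> gdist E x0 w"
      using visible_geodesic_leaves[OF vis g, of s] s p_n g
      unfolding ball_n_def is_geodesic_def by (cases "s = 0") auto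
    also have "\<dots> \<le> j + gdist E (ps j) w"
      using gdist_triangle[OF conn, of x0 w "ps j"] geodesic_gdist_start[OF ps, of j] j p_n
      by simp
    finally show ?thesis using w(2) by linarith
  qed
qed

lemma last_index_gap_bound:
  fixes c :: real
  assumes "P 0" and alt: "\<And>j. j \<le> i \<Longrightarrow> P j \<or> real n \<le> real j + c"
    and "i \<le> n" and "0 \<le> c"
  obtains j where "j \<le> i" "P j" "real i \<le> real j + 1 + c"
proof -
  define j where "j = Max {j. j \<le> i \<and> P j}"
  have fin: "finite {j. j \<le> i \<and> P j}" by simp
  have "j \<in> {j. j \<le> i \<and> P j}"
    unfolding j_def using \<open>P 0\<close> by (intro Max_in fin) auto
  then have j: "j \<le> i" "P j" by simp_all
  have "real i \<le> real j + 1 + c"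
  proof (cases "j = i")
    case False
    with j have "Suc j \<le> i" by simp
    moreover have "\<not> P (Suc j)"
    proof
      assume "P (Suc j)"
      with \<open>Suc j \<le> i\<close> have "Suc j \<le> j"
        unfolding j_def by (intro Max_ge fin) simp
      then show False by simp
    qed
    ultimately show ?thesis using alt[of "Suc j"] \<open>i \<le> n\<close> by simp
  qed (use \<open>0 \<le> c\<close> in simp)
  with j that show ?thesis by blast
qed

theorem mainTheorem16:
  fixes E :: "'a \<Rightarrow> 'a \<Rightarrow> bool" and \<delta> :: real and x0 x p :: 'a
    and n :: nat and xs ps :: "nat \<Rightarrow> 'a"
  assumes sym: "\<And>u v. E u v \<Longrightarrow> E v u"
    and conn: "graph_connected E"
    and hyp: "hyperbolic E \<delta>"
    and n_le: "n \<le> gdist E x0 x"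
    and vis: "p \<in> visible_set E x (ball_n E x0 n)"
    and geo_x: "is_geodesic E x0 x xs"
    and geo_p: "is_geodesic E x0 p ps"
  shows "\<forall>i\<le>n. real (gdist E (xs i) (ps i)) \<le> 4 * \<delta> + 2"
proof (intro allI impI)
  fix i assume i: "i \<le> n"
  have \<delta>: "0 \<le> \<delta>" using hyperbolic_nonneg[OF hyp] .
  define close where "close j \<longleftrightarrow> (\<exists>k\<le>gdist E x0 x. real (gdist E (ps j) (xs k)) \<le> \<delta>)" for j
  have "close 0"
    using geo_x geo_p \<delta> unfolding close_def is_geodesic_def by auto
  moreover have "close j \<or> real n \<le> real j + \<delta>" if "j \<le> i" for j
    using visible_geodesic_close_or_late[OF sym conn hyp n_le vis geo_x geo_p] that i
    unfolding close_def by simp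
  ultimately obtain j where j: "j \<le> i" "close j" "real i \<le> real j + 1 + \<delta>"
    using last_index_gap_bound[of close i n \<delta>] i \<delta> by blast
  then obtain k where k: "k \<le> gdist E x0 x" "real (gdist E (ps j) (xs k)) \<le> \<delta>"
    unfolding close_def by blast
  have "gdist E (xs i) (ps i) \<le> 2 * (i - j) + 2 * gdist E (ps j) (xs k)"
    using geodesics_from_common_start_close[OF sym conn geo_x geo_p k(1) j(1)] i n_le
      visible_on_sphere[OF sym conn n_le vis] by simp
  then have "real (gdist E (xs i) (ps i)) \<le> 2 * (real i - real j) + 2 * real (gdist E (ps j) (xs k))"
    using j(1) by (simp add: of_nat_diff)
  with j(3) k(2) show "real (gdist E (xs i) (ps i)) \<le> 4 * \<delta> + 2" by argo
qed

end
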